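(* Let $G=(V_G,E_G)$ be a finite directed acyclic graph. There is a one-to-one correspondence between Bayesian networks based on $G$ and CDU functors $\mathsf{Free}(G)\to\mathsf{Stoch}$. Explicitly, a Bayesian network $(\tau,\{P(A\mid \mathrm{Pa}(A))\}_{A\in V_G})$ corresponds to the CDU functor $\mathcal F$ with $\mathcal F(A)=\tau(A)$ on generating objects and sending the generator $a\colon B_1\otimes\cdots\otimes B_k\to A$ to the stochastic matrix with entries $\mathcal F(a)^{j}_{i_1\ldots i_k}=P(A=j\mid \mathrm{Pa}(A)=(i_1,\ldots,i_k))$; conversely a CDU functor $\mathcal F$ determines the Bayesian network with $\tau(A)=\mathcal F(A)$ and $P(A=j\mid\mathrm{Pa}(A)=(i_1,\ldots,i_k))=\mathcal F(a)^j_{i_1\ldots i_k}$, and these two assignments are mutually inverse.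
   Context: $\mathsf{Stoch}$ is the symmetric monoidal category whose objects are finite (nonempty) sets and whose morphisms $f\colon A\to B$ are $|B|\times|A|$ matrices of nonnegative reals with every column summing to $1$ (entries written $f_i^j$, $i\in A$, $j\in B$); composition is matrix multiplication, the monoidal product is cartesian product on objects and Kronecker product on matrices, $I=\{*\}$, and the symmetry is the swap matrix. A CDU category is a symmetric monoidal category in which every object $A$ carries a copy map $A\to A\otimes A$, a discard map $A\to I$ and a uniform state $I\to A$, such that copy is coassociative, cocommutative and counital with respect to discard, and discard composed with the uniform state is the identity on $I$; the structure on $I$ is trivial and that on $A\otimes B$ is built componentwise from those on $A$ and $B$. In $\mathsf{Stoch}$ these are: copy $(\Delta)_i^{jk}=\delta_i^j\delta_i^k$, discard $(\epsilon)_i=1$, uniform $(u)^i=1/|A|$. A CDU functor is a symmetric monoidal functor between CDU categories preserving copy maps, discard maps and uniform states. For a set $X$ of generating objects and a set $\Sigma$ of typed generating morphisms $f\colon u\to w$ ($u,w\in X^\star$), the free CDU category $\mathsf{FreeCDU}(X,\Sigma)$ has objects the words $X^\star$ and morphisms the string diagrams built from $\Sigma$ and copy/discard/uniform maps on each $x\in X$, modulo the CDU equations above. For a dag $G$, $\mathsf{Free}(G):=\mathsf{FreeCDU}(V_G,\Sigma_G)$ where $\Sigma_G$ contains, for each node $A$ with parents $B_1,\ldots,B_k$ (in a fixed order), one generator $a\colon B_1\otimes\cdots\otimes B_k\to A$. A Bayesian network based on $G$ consists of an assignment of a finite set $\tau(A)$ to each node $A\in V_G$ together with, for each $A$, a conditional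 probability distribution $P(A\mid\mathrm{Pa}(A))$ of values in $\tau(A)$ given values in $\tau(B_1)\times\cdots\times\tau(B_k)$ of the parents. *)

theory Defs
  imports Complex_Main
begin

text \<open>A dag is given by a finite vertex set V and, for every node A, the list pa A of
its parents B_1, ..., B_k in a fixed order; the edges are B -> A for B in set (pa A).\<close>

definition dag_edges :: "'v set \<Rightarrow> ('v \<Rightarrow> 'v list) \<Rightarrow> ('v \<times> 'v) set" where
  "dag_edges V pa = {(b, a). a \<in> V \<and> b \<in> set (pa a)}"

definition is_dag :: "'v set \<Rightarrow> ('v \<Rightarrow> 'v list) \<Rightarrow> bool" where
  "is_dag V pa \<longleftrightarrow> finite V \<and> (\<forall>a\<in>V. set (pa a) \<subseteq> V \<and> distinct (pa a))
      \<and> acyclic (dag_edges V pa)"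

datatype 'v diag =
    Gen 'v
  | Idw "'v list"
  | Comp "'v diag" "'v diag"    \<comment> \<open>Comp d e = first d, then e\<close>
  | Tens "'v diag" "'v diag"
  | Sw "'v list" "'v list"
  | Cp 'v
  | Dc 'v
  | Unif 'v

fun ddom :: "('v \<Rightarrow> 'v list) \<Rightarrow> 'v diag \<Rightarrow> 'v list" and
    dcod :: "('v \<Rightarrow> 'v list) \<Rightarrow> 'v diag \<Rightarrow> 'v list" where
  "ddom pa (Gen a) = pa a"
| "ddom pa (Idw u) = u"
| "ddom pa (Comp d e) = ddom pa d"
| "ddom pa (Tens d e) = ddom pa d @ ddom pa e"
| "ddom pa (Sw u w) = u @ w"
| "ddom pa (Cp x) = [x]"
| "ddom pa (Dc x) = [x]"
| "ddom pa (Unif x) = []"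
| "dcod pa (Gen a) = [a]"
| "dcod pa (Idw u) = u"
| "dcod pa (Comp d e) = dcod pa e"
| "dcod pa (Tens d e) = dcod pa d @ dcod pa e"
| "dcod pa (Sw u w) = w @ u"
| "dcod pa (Cp x) = [x, x]"
| "dcod pa (Dc x) = []"
| "dcod pa (Unif x) = [x]"

fun wfd :: "'v set \<Rightarrow> ('v \<Rightarrow> 'v list) \<Rightarrow> 'v diag \<Rightarrow> bool" where
  "wfd V pa (Gen a) = (a \<in> V)"
| "wfd V pa (Idw u) = (set u \<subseteq> V)"
| "wfd V pa (Comp d e) = (wfd V pa d \<and> wfd V pa e \<and> dcod pa d = ddom pa e)"
| "wfd V pa (Tens d e) = (wfd V pa d \<and> wfd V pa e)"
| "wfd V pa (Sw u w) = (set u \<subseteq> V \<and> set w \<subseteq> V)"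
| "wfd V pa (Cp x) = (x \<in> V)"
| "wfd V pa (Dc x) = (x \<in> V)"
| "wfd V pa (Unif x) = (x \<in> V)"

inductive cdu_ax :: "('v \<Rightarrow> 'v list) \<Rightarrow> 'v diag \<Rightarrow> 'v diag \<Rightarrow> bool" for pa where
  id_l: "cdu_ax pa (Comp (Idw (ddom pa d)) d) d"
| id_r: "cdu_ax pa (Comp d (Idw (dcod pa d))) d"
| comp_assoc: "cdu_ax pa (Comp (Comp d e) f) (Comp d (Comp e f))"
| tens_assoc: "cdu_ax pa (Tens (Tens d e) f) (Tens d (Tens e f))"
| tens_unit_l: "cdu_ax pa (Tens (Idw []) d) d"
| tens_unit_r: "cdu_ax pa (Tens d (Idw [])) d"
| tens_id: "cdu_ax pa (Tens (Idw u) (Idw w)) (Idw (u @ w))"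
| interchange: "cdu_ax pa (Comp (Tens d1 d2) (Tens e1 e2)) (Tens (Comp d1 e1) (Comp d2 e2))"
| sw_nat: "cdu_ax pa (Comp (Tens d e) (Sw (dcod pa d) (dcod pa e)))
                     (Comp (Sw (ddom pa d) (ddom pa e)) (Tens e d))"
| sw_hex: "cdu_ax pa (Sw u (w @ v)) (Comp (Tens (Sw u w) (Idw v)) (Tens (Idw w) (Sw u v)))"
| sw_inv: "cdu_ax pa (Comp (Sw u w) (Sw w u)) (Idw (u @ w))"
| sw_unit: "cdu_ax pa (Sw [] u) (Idw u)"
| coassoc: "cdu_ax pa (Comp (Cp x) (Tens (Cp x) (Idw [x]))) (Comp (Cp x) (Tens (Idw [x]) (Cp x)))"
| cocomm: "cdu_ax pa (Comp (Cp x) (Sw [x] [x])) (Cp x)"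
| counit: "cdu_ax pa (Comp (Cp x) (Tens (Dc x) (Idw [x]))) (Idw [x])"
| disc_unif: "cdu_ax pa (Comp (Unif x) (Dc x)) (Idw [])"

text \<open>Equality of morphisms in Free(G): the congruence generated by the axioms on
well-formed diagrams.\<close>

inductive cdu_eqv :: "'v set \<Rightarrow> ('v \<Rightarrow> 'v list) \<Rightarrow> 'v diag \<Rightarrow> 'v diag \<Rightarrow> bool"
  for V pa where
  ax: "cdu_ax pa d e \<Longrightarrow> wfd V pa d \<Longrightarrow> wfd V pa e \<Longrightarrow> ddom pa d = ddom pa e
        \<Longrightarrow> dcod pa d = dcod pa e \<Longrightarrow> cdu_eqv V pa d e"
| refl: "wfd V pa d \<Longrightarrow> cdu_eqv V pa d d"
| sym: "cdu_eqv V pa d e \<Longrightarrow> cdu_eqv V pa e d"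
| trans: "cdu_eqv V pa d e \<Longrightarrow> cdu_eqv V pa e f \<Longrightarrow> cdu_eqv V pa d f"
| comp_cong: "cdu_eqv V pa d d' \<Longrightarrow> cdu_eqv V pa e e' \<Longrightarrow> dcod pa d = ddom pa e
        \<Longrightarrow> cdu_eqv V pa (Comp d e) (Comp d' e')"
| tens_cong: "cdu_eqv V pa d d' \<Longrightarrow> cdu_eqv V pa e e' \<Longrightarrow> cdu_eqv V pa (Tens d e) (Tens d' e')"

text \<open>The object F(x_1...x_n) is the cartesian product F(x_1) x ... x F(x_n), represented
as the set of tuples (lists).  A morphism is a function f with f i j = f_i^j.\<close>

definition tuples :: "('v \<Rightarrow> 'a set) \<Rightarrow> 'v list \<Rightarrow> 'a list set" where
  "tuples F u = {is. length is = length u \<and> (\<forall>k<length u. is ! k \<in> F (u ! k))}"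

definition stoch_mat :: "'a list set \<Rightarrow> 'a list set \<Rightarrow> ('a list \<Rightarrow> 'a list \<Rightarrow> real) \<Rightarrow> bool" where
  "stoch_mat A B f \<longleftrightarrow> (\<forall>i\<in>A. (\<forall>j\<in>B. 0 \<le> f i j) \<and> (\<Sum>j\<in>B. f i j) = 1)"

definition cdu_functor :: "'v set \<Rightarrow> ('v \<Rightarrow> 'v list) \<Rightarrow> ('v \<Rightarrow> 'a set)
      \<Rightarrow> ('v diag \<Rightarrow> 'a list \<Rightarrow> 'a list \<Rightarrow> real) \<Rightarrow> bool" where
  "cdu_functor V pa Fo Fm \<longleftrightarrow>
     (\<forall>x\<in>V. finite (Fo x) \<and> Fo x \<noteq> {}) \<and>
     (\<forall>d. wfd V pa d \<longrightarrow> stoch_mat (tuples Fo (ddom pa d)) (tuples Fo (dcod pa d)) (Fm d)) \<and>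
     \<comment> \<open>well defined on morphisms of Free(G)\<close>
     (\<forall>d e. cdu_eqv V pa d e \<longrightarrow>
        (\<forall>i\<in>tuples Fo (ddom pa d). \<forall>j\<in>tuples Fo (dcod pa d). Fm d i j = Fm e i j)) \<and>
     \<comment> \<open>functoriality\<close>
     (\<forall>u. set u \<subseteq> V \<longrightarrow> (\<forall>i\<in>tuples Fo u. \<forall>j\<in>tuples Fo u.
        Fm (Idw u) i j = (if i = j then 1 else 0))) \<and>
     (\<forall>d e. wfd V pa (Comp d e) \<longrightarrow>
        (\<forall>i\<in>tuples Fo (ddom pa d). \<forall>k\<in>tuples Fo (dcod pa e).
          Fm (Comp d e) i k = (\<Sum>j\<in>tuples Fo (dcod pa d). Fm d i j * Fm e j k))) \<and>
     \<comment> \<open>(strict) monoidality\<close>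
     (\<forall>d e. wfd V pa (Tens d e) \<longrightarrow>
        (\<forall>i\<in>tuples Fo (ddom pa (Tens d e)). \<forall>j\<in>tuples Fo (dcod pa (Tens d e)).
          Fm (Tens d e) i j =
            Fm d (take (length (ddom pa d)) i) (take (length (dcod pa d)) j)
            * Fm e (drop (length (ddom pa d)) i) (drop (length (dcod pa d)) j))) \<and>
     \<comment> \<open>preservation of the symmetry\<close>
     (\<forall>u w. set u \<subseteq> V \<and> set w \<subseteq> V \<longrightarrow>
        (\<forall>i\<in>tuples Fo (u @ w). \<forall>j\<in>tuples Fo (w @ u).
          Fm (Sw u w) i j = (if j = drop (length u) i @ take (length u) i then 1 else 0))) \<and>
     \<comment> \<open>preservation of copy, discard and uniform maps\<close>
     (\<forall>x\<in>V. \<forall>i\<in>Fo x. \<forall>j\<in>Fo x. \<forall>k\<in>Fo x.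
        Fm (Cp x) [i] [j, k] = (if i = j \<and> i = k then 1 else 0)) \<and>
     (\<forall>x\<in>V. \<forall>i\<in>Fo x. Fm (Dc x) [i] [] = 1) \<and>
     (\<forall>x\<in>V. \<forall>j\<in>Fo x. Fm (Unif x) [] [j] = 1 / real (card (Fo x)))"

definition functor_eq :: "'v set \<Rightarrow> ('v \<Rightarrow> 'v list) \<Rightarrow> ('v \<Rightarrow> 'a set)
      \<Rightarrow> ('v diag \<Rightarrow> 'a list \<Rightarrow> 'a list \<Rightarrow> real) \<Rightarrow> ('v \<Rightarrow> 'a set)
      \<Rightarrow> ('v diag \<Rightarrow> 'a list \<Rightarrow> 'a list \<Rightarrow> real) \<Rightarrow> bool" where
  "functor_eq V pa Fo Fm Fo' Fm' \<longleftrightarrow> (\<forall>x\<in>V. Fo x = Fo' x) \<and>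
     (\<forall>d. wfd V pa d \<longrightarrow> (\<forall>i\<in>tuples Fo (ddom pa d). \<forall>j\<in>tuples Fo (dcod pa d).
        Fm d i j = Fm' d i j))"

text \<open>tau A is the finite set of values of A; P A is j = P(A = j | Pa(A) = is).\<close>

definition bayes_net :: "'v set \<Rightarrow> ('v \<Rightarrow> 'v list) \<Rightarrow> ('v \<Rightarrow> 'a set)
      \<Rightarrow> ('v \<Rightarrow> 'a list \<Rightarrow> 'a \<Rightarrow> real) \<Rightarrow> bool" where
  "bayes_net V pa \<tau> P \<longleftrightarrow> (\<forall>A\<in>V. finite (\<tau> A) \<and> \<tau> A \<noteq> {} \<and>
     (\<forall>is\<in>tuples \<tau> (pa A). (\<forall>j\<in>\<tau> A. 0 \<le> P A is j) \<and> (\<Sum>j\<in>\<tau> A. P A is j) = 1))"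

definition bn_eq :: "'v set \<Rightarrow> ('v \<Rightarrow> 'v list) \<Rightarrow> ('v \<Rightarrow> 'a set) \<Rightarrow> ('v \<Rightarrow> 'a list \<Rightarrow> 'a \<Rightarrow> real)
      \<Rightarrow> ('v \<Rightarrow> 'a set) \<Rightarrow> ('v \<Rightarrow> 'a list \<Rightarrow> 'a \<Rightarrow> real) \<Rightarrow> bool" where
  "bn_eq V pa \<tau> P \<tau>' P' \<longleftrightarrow> (\<forall>A\<in>V. \<tau> A = \<tau>' A \<and>
     (\<forall>is\<in>tuples \<tau> (pa A). \<forall>j\<in>\<tau> A. P A is j = P' A is j))"

definition bn_of_functor :: "('v diag \<Rightarrow> 'a list \<Rightarrow> 'a list \<Rightarrow> real) \<Rightarrow> 'v \<Rightarrow> 'a list \<Rightarrow> 'a \<Rightarrow> real" where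
  "bn_of_functor Fm A is j = Fm (Gen A) is [j]"

end

theory Submission
  imports Defs
begin

(* A Bayesian network extends to all string diagrams by structural recursion: generators go to
   their tables P(A | Pa(A)), composition to matrix product, tensor to Kronecker product, and the
   structure maps to those of Stoch.  The extension respects the congruence defining Free(G)
   because every CDU axiom holds for these matrices.  Restricting a CDU functor to the generators
   gives back a network, and the functor is forced to agree with the extension of that network by
   induction on diagrams, since its values on composites, tensors and structure maps are
   prescribed. *)

section \<open>Tuples and stochastic matrices\<close>

lemma tuples_Nil [simp]: "tuples F [] = {[]}"
  by (auto simp: tuples_def)

lemma mem_tuples_Cons:
  "i \<in> tuples F (x # u) \<longleftrightarrow> (\<exists>a r. i = a # r \<and> a \<in> F x \<and> r \<in> tuples F u)"
  by (cases i) (auto simp: tuples_def nth_Cons split: nat.splits)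

lemma Cons_in_tuples [simp]: "a # r \<in> tuples F (x # u) \<longleftrightarrow> a \<in> F x \<and> r \<in> tuples F u"
  by (simp add: mem_tuples_Cons)

lemma tuples_Cons: "tuples F (x # u) = (\<lambda>(a, r). a # r) ` (F x \<times> tuples F u)"
  by (auto simp: mem_tuples_Cons)

lemma tuples_single: "tuples F [x] = (\<lambda>a. [a]) ` F x"
  by (auto simp: mem_tuples_Cons)

lemma card_tuples_single: "card (tuples F [x]) = card (F x)"
  by (simp add: tuples_single card_image inj_on_def)

lemma length_tuples: "i \<in> tuples F u \<Longrightarrow> length i = length u"
  by (simp add: tuples_def)

lemma finite_tuples: "(\<And>x. x \<in> set u \<Longrightarrow> finite (F x)) \<Longrightarrow> finite (tuples F u)"
  by (induction u) (auto simp: tuples_Cons)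

lemma tuples_cong: "(\<And>x. x \<in> set u \<Longrightarrow> F x = F' x) \<Longrightarrow> tuples F u = tuples F' u"
  by (induction u) (simp_all add: tuples_Cons)

lemma mem_tuples_append:
  "i \<in> tuples F (u @ w) \<longleftrightarrow> (\<exists>a b. i = a @ b \<and> a \<in> tuples F u \<and> b \<in> tuples F w)"
proof (induction u arbitrary: i)
  case (Cons x u)
  have "i \<in> tuples F ((x # u) @ w) \<longleftrightarrow>
      (\<exists>c a b. i = c # a @ b \<and> c \<in> F x \<and> a \<in> tuples F u \<and> b \<in> tuples F w)"
    by (auto simp: mem_tuples_Cons Cons.IH)
  also have "\<dots> \<longleftrightarrow> (\<exists>a b. i = a @ b \<and> a \<in> tuples F (x # u) \<and> b \<in> tuples F w)"
  proof
    assume "\<exists>c a b. i = c # a @ b \<and> c \<in> F x \<and> a \<in> tuples F u \<and> b \<in> tuples F w"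
    then obtain c a b where "i = (c # a) @ b" "c # a \<in> tuples F (x # u)" "b \<in> tuples F w"
      by auto
    then show "\<exists>a b. i = a @ b \<and> a \<in> tuples F (x # u) \<and> b \<in> tuples F w"
      by blast
  next
    assume "\<exists>a b. i = a @ b \<and> a \<in> tuples F (x # u) \<and> b \<in> tuples F w"
    then obtain c a b where "i = c # a @ b" "c \<in> F x" "a \<in> tuples F u" "b \<in> tuples F w"
      by (auto simp: mem_tuples_Cons)
    then show "\<exists>c a b. i = c # a @ b \<and> c \<in> F x \<and> a \<in> tuples F u \<and> b \<in> tuples F w"
      by blast
  qed
  finally show ?case .
qed simp

lemma append_in_tuples: "a \<in> tuples F u \<Longrightarrow> b \<in> tuples F w \<Longrightarrow> a @ b \<in> tuples F (u @ w)"
  by (auto simp: mem_tuples_append)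

lemma tuples_appendE:
  assumes "i \<in> tuples F (u @ w)"
  obtains a b where "i = a @ b" "a \<in> tuples F u" "b \<in> tuples F w"
    "length a = length u" "length b = length w"
  using assms by (auto simp: mem_tuples_append dest: length_tuples)

lemma take_drop_in_tuples:
  assumes "i \<in> tuples F (u @ w)"
  shows "take (length u) i \<in> tuples F u" "drop (length u) i \<in> tuples F w"
  using assms by (auto elim: tuples_appendE)

lemma sum_tuples_append:
  "(\<Sum>j\<in>tuples F (u @ w). f j) = (\<Sum>a\<in>tuples F u. \<Sum>b\<in>tuples F w. f (a @ b))"
proof -
  have "tuples F (u @ w) = (\<lambda>(a, b). a @ b) ` (tuples F u \<times> tuples F w)"
    unfolding set_eq_iff mem_tuples_append image_iff by force
  moreover have "inj_on (\<lambda>(a, b). a @ b) (tuples F u \<times> tuples F w)"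
    by (auto intro!: inj_onI simp: append_eq_append_conv length_tuples)
  ultimately show ?thesis
    by (simp add: sum.reindex sum.cartesian_product case_prod_unfold)
qed

lemma sum_eq_single:
  assumes "finite S" "j0 \<in> S" "\<And>j. j \<in> S \<Longrightarrow> j \<noteq> j0 \<Longrightarrow> f j = 0"
  shows "sum f S = f j0"
  using sum.mono_neutral_left[of S "{j0}" f] assms by auto

lemma stoch_mat_deterministic:
  assumes "finite B" "\<And>i. i \<in> A \<Longrightarrow> \<phi> i \<in> B"
    and "\<And>i j. i \<in> A \<Longrightarrow> j \<in> B \<Longrightarrow> f i j = (if j = \<phi> i then 1 else 0)"
  shows "stoch_mat A B f"
  using assms by (simp add: stoch_mat_def cong: sum.cong)

lemma stoch_mat_comp:
  assumes "finite B" "stoch_mat A B f" "stoch_mat B C g"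
  shows "stoch_mat A C (\<lambda>i k. \<Sum>j\<in>B. f i j * g j k)"
  unfolding stoch_mat_def
proof (intro ballI conjI)
  fix i assume i: "i \<in> A"
  show "0 \<le> (\<Sum>j\<in>B. f i j * g j k)" if "k \<in> C" for k
    using assms i that by (auto simp: stoch_mat_def intro!: sum_nonneg)
  have "(\<Sum>k\<in>C. \<Sum>j\<in>B. f i j * g j k) = (\<Sum>j\<in>B. f i j * (\<Sum>k\<in>C. g j k))"
    by (subst sum.swap) (simp add: sum_distrib_left)
  also have "\<dots> = 1"
    using assms i by (simp add: stoch_mat_def)
  finally show "(\<Sum>k\<in>C. \<Sum>j\<in>B. f i j * g j k) = 1" .
qed

lemma stoch_mat_tens:
  assumes "stoch_mat (tuples F u) (tuples F w) f" "stoch_mat (tuples F u') (tuples F w') g"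
  shows "stoch_mat (tuples F (u @ u')) (tuples F (w @ w'))
    (\<lambda>i j. f (take (length u) i) (take (length w) j) * g (drop (length u) i) (drop (length w) j))"
  unfolding stoch_mat_def
proof (intro ballI conjI)
  fix i assume "i \<in> tuples F (u @ u')"
  then obtain a a' where i: "i = a @ a'" "a \<in> tuples F u" "a' \<in> tuples F u'" "length a = length u"
    by (auto elim: tuples_appendE)
  show "0 \<le> f (take (length u) i) (take (length w) j) * g (drop (length u) i) (drop (length w) j)"
    if "j \<in> tuples F (w @ w')" for j
    using that assms i by (auto simp: stoch_mat_def elim!: tuples_appendE)
  have "(\<Sum>j\<in>tuples F (w @ w'). f a (take (length w) j) * g a' (drop (length w) j))
      = (\<Sum>b\<in>tuples F w. f a b) * (\<Sum>b'\<in>tuples F w'. g a' b')"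
    by (simp add: sum_tuples_append sum_product length_tuples cong: sum.cong)
  also have "\<dots> = 1"
    using assms i by (simp add: stoch_mat_def)
  finally show "(\<Sum>j\<in>tuples F (w @ w'). f (take (length u) i) (take (length w) j)
      * g (drop (length u) i) (drop (length w) j)) = 1"
    using i by simp
qed

lemma stoch_mat_tuples_single:
  "stoch_mat A (tuples F [x]) f \<longleftrightarrow> (\<forall>i\<in>A. (\<forall>j\<in>F x. 0 \<le> f i [j]) \<and> (\<Sum>j\<in>F x. f i [j]) = 1)"
  by (simp add: stoch_mat_def tuples_single sum.reindex inj_on_def)

section \<open>The CDU functor generated by a Bayesian network\<close>

lemma wfd_types_subset:
  "\<forall>a\<in>V. set (pa a) \<subseteq> V \<Longrightarrow> wfd V pa d \<Longrightarrow> set (ddom pa d) \<subseteq> V \<and> set (dcod pa d) \<subseteq> V"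
  by (induction d) auto

lemma cdu_eqvD:
  "cdu_eqv V pa d e \<Longrightarrow> wfd V pa d \<and> wfd V pa e \<and> ddom pa d = ddom pa e \<and> dcod pa d = dcod pa e"
  by (induction rule: cdu_eqv.induct) auto

(* Entries outside well-typed tuples are junk, so Gen and Cp read their one-element arguments
   with hd. *)
fun interp :: "('v \<Rightarrow> 'a set) \<Rightarrow> ('v \<Rightarrow> 'a list \<Rightarrow> 'a \<Rightarrow> real) \<Rightarrow> ('v \<Rightarrow> 'v list) \<Rightarrow> 'v diag
    \<Rightarrow> 'a list \<Rightarrow> 'a list \<Rightarrow> real" where
  "interp \<tau> P pa (Gen a) i j = P a i (hd j)"
| "interp \<tau> P pa (Idw u) i j = (if j = i then 1 else 0)"
| "interp \<tau> P pa (Comp d e) i k =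
     (\<Sum>j\<in>tuples \<tau> (dcod pa d). interp \<tau> P pa d i j * interp \<tau> P pa e j k)"
| "interp \<tau> P pa (Tens d e) i j =
     interp \<tau> P pa d (take (length (ddom pa d)) i) (take (length (dcod pa d)) j)
     * interp \<tau> P pa e (drop (length (ddom pa d)) i) (drop (length (dcod pa d)) j)"
| "interp \<tau> P pa (Sw u w) i j = (if j = drop (length u) i @ take (length u) i then 1 else 0)"
| "interp \<tau> P pa (Cp x) i j = (if j = [hd i, hd i] then 1 else 0)"
| "interp \<tau> P pa (Dc x) i j = 1"
| "interp \<tau> P pa (Unif x) i j = 1 / real (card (\<tau> x))"

(* Composites are unfolded only on demand, so that the lemmas about composites with deterministic
   maps below get to see them. *)
lemmas interp_Comp = interp.simps(3)
declare interp_Comp [simp del]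

context
  fixes \<tau> :: "'v \<Rightarrow> 'a set" and P :: "'v \<Rightarrow> 'a list \<Rightarrow> 'a \<Rightarrow> real" and pa :: "'v \<Rightarrow> 'v list"
begin

abbreviation F where "F \<equiv> interp \<tau> P pa"

lemma interp_Comp_deterministic_left:
  assumes "finite (tuples \<tau> (dcod pa f))" "j0 \<in> tuples \<tau> (dcod pa f)"
    and "\<And>j. j \<in> tuples \<tau> (dcod pa f) \<Longrightarrow> F f i j = (if j = j0 then 1 else 0)"
  shows "F (Comp f g) i k = F g j0 k"
proof -
  have "F (Comp f g) i k = F f i j0 * F g j0 k"
    unfolding interp_Comp using assms by (intro sum_eq_single) auto
  then show ?thesis
    using assms by simp
qed

lemma interp_Comp_deterministic_right:
  assumes "finite (tuples \<tau> (dcod pa f))" "j0 \<in> tuples \<tau> (dcod pa f)"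
    and "\<And>j. j \<in> tuples \<tau> (dcod pa f) \<Longrightarrow> F g j k = (if j = j0 then 1 else 0)"
  shows "F (Comp f g) i k = F f i j0"
proof -
  have "F (Comp f g) i k = F f i j0 * F g j0 k"
    unfolding interp_Comp using assms by (intro sum_eq_single) auto
  then show ?thesis
    using assms by simp
qed

lemma interp_Comp_assoc: "F (Comp (Comp d e) f) i k = F (Comp d (Comp e f)) i k"
proof -
  let ?A = "tuples \<tau> (dcod pa d)" and ?B = "tuples \<tau> (dcod pa e)"
  have "F (Comp (Comp d e) f) i k = (\<Sum>j\<in>?B. \<Sum>l\<in>?A. F d i l * F e l j * F f j k)"
    by (simp add: interp_Comp sum_distrib_right)
  also have "\<dots> = (\<Sum>l\<in>?A. \<Sum>j\<in>?B. F d i l * F e l j * F f j k)"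
    by (rule sum.swap)
  also have "\<dots> = F (Comp d (Comp e f)) i k"
    by (simp add: interp_Comp sum_distrib_left mult.assoc)
  finally show ?thesis .
qed

lemma interp_Tens_assoc: "F (Tens (Tens d e) f) i k = F (Tens d (Tens e f)) i k"
  by (simp add: drop_take mult.assoc add.commute)

lemma interp_Tens_Idw_Nil_left: "F (Tens (Idw []) d) i k = F d i k"
  by simp

lemma interp_Tens_Idw_Nil_right:
  "i \<in> tuples \<tau> (ddom pa d) \<Longrightarrow> k \<in> tuples \<tau> (dcod pa d)
    \<Longrightarrow> F (Tens d (Idw [])) i k = F d i k"
  by (simp add: length_tuples)

lemma interp_Tens_Idw:
  assumes "i \<in> tuples \<tau> (u @ w)" "k \<in> tuples \<tau> (u @ w)"
  shows "F (Tens (Idw u) (Idw w)) i k = F (Idw (u @ w)) i k"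
  using assms by (auto elim!: tuples_appendE)

lemma interp_Sw_Nil: "F (Sw [] u) i k = F (Idw u) i k"
  by simp

lemma interp_interchange:
  assumes "dcod pa d1 = ddom pa e1" "dcod pa d2 = ddom pa e2"
    and "i \<in> tuples \<tau> (ddom pa d1 @ ddom pa d2)" "k \<in> tuples \<tau> (dcod pa e1 @ dcod pa e2)"
  shows "F (Comp (Tens d1 d2) (Tens e1 e2)) i k
    = F (Tens (Comp d1 e1) (Comp d2 e2)) i k"
proof -
  let ?A = "tuples \<tau> (dcod pa d1)" and ?B = "tuples \<tau> (dcod pa d2)"
  obtain i1 i2 where i: "i = i1 @ i2" "length i1 = length (ddom pa d1)"
    using assms(3) by (auto elim: tuples_appendE)
  obtain k1 k2 where k: "k = k1 @ k2" "length k1 = length (dcod pa e1)"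
    using assms(4) by (auto elim: tuples_appendE)
  have "F (Comp (Tens d1 d2) (Tens e1 e2)) i k
      = (\<Sum>a\<in>?A. \<Sum>b\<in>?B. F d1 i1 a * F d2 i2 b * (F e1 a k1 * F e2 b k2))"
    using assms(1,2) i k by (simp add: interp_Comp sum_tuples_append length_tuples cong: sum.cong)
  also have "\<dots> = (\<Sum>a\<in>?A. F d1 i1 a * F e1 a k1) * (\<Sum>b\<in>?B. F d2 i2 b * F e2 b k2)"
    by (simp add: sum_product ac_simps)
  also have "\<dots> = F (Tens (Comp d1 e1) (Comp d2 e2)) i k"
    using i k by (simp add: interp_Comp)
  finally show ?thesis .
qed

context
  fixes V :: "'v set"
  assumes pa_V: "\<forall>a\<in>V. set (pa a) \<subseteq> V" and bn: "bayes_net V pa \<tau> P"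
begin

lemma finite_tuples_V: "set u \<subseteq> V \<Longrightarrow> finite (tuples \<tau> u)"
  using bn by (intro finite_tuples) (auto simp: bayes_net_def)

lemma finite_tuples_ddom_dcod:
  "wfd V pa d \<Longrightarrow> finite (tuples \<tau> (ddom pa d)) \<and> finite (tuples \<tau> (dcod pa d))"
  using wfd_types_subset[OF pa_V] finite_tuples_V by blast

lemma interp_stoch_mat: "wfd V pa d \<Longrightarrow> stoch_mat (tuples \<tau> (ddom pa d)) (tuples \<tau> (dcod pa d)) (F d)"
proof (induction d)
  case (Gen a)
  then show ?case
    using bn by (simp add: stoch_mat_tuples_single bayes_net_def)
next
  case (Idw u)
  then show ?case
    by (intro stoch_mat_deterministic[where \<phi> = "\<lambda>i. i"]) (auto intro: finite_tuples_V)
next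
  case (Comp d e)
  have "F (Comp d e) = (\<lambda>i k. \<Sum>j\<in>tuples \<tau> (dcod pa d). F d i j * F e j k)"
    by (simp add: fun_eq_iff interp_Comp)
  then show ?case
    using Comp finite_tuples_ddom_dcod[of d] by (simp add: stoch_mat_comp)
next
  case (Tens d e)
  have "F (Tens d e) = (\<lambda>i j. F d (take (length (ddom pa d)) i) (take (length (dcod pa d)) j)
      * F e (drop (length (ddom pa d)) i) (drop (length (dcod pa d)) j))"
    by (simp add: fun_eq_iff)
  then show ?case
    using Tens by (simp add: stoch_mat_tens)
next
  case (Sw u w)
  then show ?case
    by (intro stoch_mat_deterministic[where \<phi> = "\<lambda>i. drop (length u) i @ take (length u) i"])
      (auto simp: finite_tuples_V intro: append_in_tuples take_drop_in_tuples)
next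
  case (Cp x)
  then show ?case
    by (intro stoch_mat_deterministic[where \<phi> = "\<lambda>i. [hd i, hd i]"])
      (auto intro: finite_tuples_V simp: tuples_single)
next
  case (Dc x)
  then show ?case by (simp add: stoch_mat_def)
next
  case (Unif x)
  then show ?case
    using bn by (simp add: stoch_mat_def card_tuples_single bayes_net_def)
qed

lemma interp_Comp_Idw_left:
  "set u \<subseteq> V \<Longrightarrow> i \<in> tuples \<tau> u \<Longrightarrow> F (Comp (Idw u) d) i k = F d i k"
  by (rule interp_Comp_deterministic_left) (auto simp: finite_tuples_V)

lemma interp_Comp_Idw_right:
  "set (dcod pa d) \<subseteq> V \<Longrightarrow> k \<in> tuples \<tau> (dcod pa d) \<Longrightarrow> F (Comp d (Idw (dcod pa d))) i k = F d i k"
  by (rule interp_Comp_deterministic_right) (auto simp: finite_tuples_V)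

lemma interp_Comp_Sw_left:
  assumes "set u \<subseteq> V" "set w \<subseteq> V" "i \<in> tuples \<tau> (u @ w)"
  shows "F (Comp (Sw u w) g) i k = F g (drop (length u) i @ take (length u) i) k"
  by (rule interp_Comp_deterministic_left)
    (use assms in \<open>auto simp: finite_tuples_V intro: append_in_tuples take_drop_in_tuples\<close>)

lemma interp_Comp_Sw_right:
  assumes "set u \<subseteq> V" "set w \<subseteq> V" "dcod pa f = u @ w" "k \<in> tuples \<tau> (w @ u)"
  shows "F (Comp f (Sw u w)) i k = F f i (drop (length w) k @ take (length w) k)"
proof (rule interp_Comp_deterministic_right)
  obtain b a where k: "k = b @ a" "a \<in> tuples \<tau> u" "b \<in> tuples \<tau> w" "length b = length w"
    using assms(4) by (auto elim: tuples_appendE)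
  show "finite (tuples \<tau> (dcod pa f))" "drop (length w) k @ take (length w) k \<in> tuples \<tau> (dcod pa f)"
    using assms k by (auto simp: finite_tuples_V intro: append_in_tuples)
  fix j assume "j \<in> tuples \<tau> (dcod pa f)"
  then obtain a' b' where "j = a' @ b'" "length a' = length u" "length b' = length w"
    using assms(3) by (auto elim: tuples_appendE)
  then show "F (Sw u w) j k = (if j = drop (length w) k @ take (length w) k then 1 else 0)"
    using k by auto
qed

lemma interp_sw_nat:
  assumes "wfd V pa d" "wfd V pa e"
    and "i \<in> tuples \<tau> (ddom pa d @ ddom pa e)" "k \<in> tuples \<tau> (dcod pa e @ dcod pa d)"
  shows "F (Comp (Tens d e) (Sw (dcod pa d) (dcod pa e))) i k
    = F (Comp (Sw (ddom pa d) (ddom pa e)) (Tens e d)) i k"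
proof -
  obtain i1 i2 where i: "i = i1 @ i2" "length i1 = length (ddom pa d)" "length i2 = length (ddom pa e)"
    using assms(3) by (auto elim: tuples_appendE)
  obtain k2 k1 where k: "k = k2 @ k1" "length k2 = length (dcod pa e)" "length k1 = length (dcod pa d)"
    using assms(4) by (auto elim: tuples_appendE)
  have V: "set (ddom pa d) \<subseteq> V" "set (dcod pa d) \<subseteq> V" "set (ddom pa e) \<subseteq> V" "set (dcod pa e) \<subseteq> V"
    using assms(1,2) wfd_types_subset[OF pa_V] by auto
  have "F (Comp (Tens d e) (Sw (dcod pa d) (dcod pa e))) i k = F (Tens d e) i (k1 @ k2)"
    using V assms(4) k by (subst interp_Comp_Sw_right) auto
  also have "\<dots> = F d i1 k1 * F e i2 k2"
    using i k by simp
  also have "\<dots> = F (Comp (Sw (ddom pa d) (ddom pa e)) (Tens e d)) i k"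
    using V assms(3) i k by (subst interp_Comp_Sw_left) auto
  finally show ?thesis .
qed

lemma interp_sw_hex:
  assumes "set u \<subseteq> V" "set w \<subseteq> V" "set v \<subseteq> V"
    and "i \<in> tuples \<tau> (u @ w @ v)" "k \<in> tuples \<tau> ((w @ v) @ u)"
  shows "F (Sw u (w @ v)) i k = F (Comp (Tens (Sw u w) (Idw v)) (Tens (Idw w) (Sw u v))) i k"
proof -
  obtain a b c where i: "i = a @ b @ c" "a \<in> tuples \<tau> u" "b \<in> tuples \<tau> w" "c \<in> tuples \<tau> v"
    "length a = length u" "length b = length w"
    using assms(4) by (auto elim!: tuples_appendE)
  obtain b' c' a' where k: "k = (b' @ c') @ a'" "length b' = length w" "length c' = length v"
    using assms(5) by (auto elim!: tuples_appendE)
  have "F (Comp (Tens (Sw u w) (Idw v)) (Tens (Idw w) (Sw u v))) i k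
      = F (Tens (Idw w) (Sw u v)) ((b @ a) @ c) k"
  proof (rule interp_Comp_deterministic_left)
    show "finite (tuples \<tau> (dcod pa (Tens (Sw u w) (Idw v))))"
      using assms(1-3) by (simp add: finite_tuples_V)
    show "(b @ a) @ c \<in> tuples \<tau> (dcod pa (Tens (Sw u w) (Idw v)))"
      using i by (simp add: append_in_tuples)
    fix j assume "j \<in> tuples \<tau> (dcod pa (Tens (Sw u w) (Idw v)))"
    then obtain x y z where "j = (x @ y) @ z" "length x = length w" "length y = length u"
      by (auto elim!: tuples_appendE)
    then show "F (Tens (Sw u w) (Idw v)) i j = (if j = (b @ a) @ c then 1 else 0)"
      using i by auto
  qed
  also have "\<dots> = F (Sw u (w @ v)) i k"
    using i k by auto
  finally show ?thesis by simp
qed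

lemma interp_sw_inv:
  assumes "set u \<subseteq> V" "set w \<subseteq> V" "i \<in> tuples \<tau> (u @ w)" "k \<in> tuples \<tau> (u @ w)"
  shows "F (Comp (Sw u w) (Sw w u)) i k = F (Idw (u @ w)) i k"
proof -
  obtain a b where ab: "i = a @ b" "length a = length u" "length b = length w"
    using assms(3) by (auto elim: tuples_appendE)
  then have "F (Comp (Sw u w) (Sw w u)) i k = F (Sw w u) (b @ a) k"
    using assms by (subst interp_Comp_Sw_left) auto
  then show ?thesis
    using ab by simp
qed

lemma interp_Comp_Cp: "x \<in> V \<Longrightarrow> a \<in> \<tau> x \<Longrightarrow> F (Comp (Cp x) g) [a] k = F g [a, a] k"
  by (rule interp_Comp_deterministic_left) (auto simp: finite_tuples_V)

lemma interp_coassoc: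
  assumes "x \<in> V" "i \<in> tuples \<tau> [x]" "k \<in> tuples \<tau> [x, x, x]"
  shows "F (Comp (Cp x) (Tens (Cp x) (Idw [x]))) i k = F (Comp (Cp x) (Tens (Idw [x]) (Cp x))) i k"
  using assms by (auto simp: mem_tuples_Cons interp_Comp_Cp split: if_split_asm)

lemma interp_cocomm:
  assumes "x \<in> V" "i \<in> tuples \<tau> [x]" "k \<in> tuples \<tau> [x, x]"
  shows "F (Comp (Cp x) (Sw [x] [x])) i k = F (Cp x) i k"
  using assms by (auto simp: mem_tuples_Cons interp_Comp_Cp split: if_split_asm)

lemma interp_counit:
  assumes "x \<in> V" "i \<in> tuples \<tau> [x]" "k \<in> tuples \<tau> [x]"
  shows "F (Comp (Cp x) (Tens (Dc x) (Idw [x]))) i k = F (Idw [x]) i k"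
  using assms by (auto simp: mem_tuples_Cons interp_Comp_Cp split: if_split_asm)

lemma interp_disc_unif: "x \<in> V \<Longrightarrow> F (Comp (Unif x) (Dc x)) i k = F (Idw []) [] []"
  using bn by (simp add: interp_Comp card_tuples_single bayes_net_def)

lemma cdu_ax_sound:
  assumes "cdu_ax pa d e" "wfd V pa d" "wfd V pa e"
    and "i \<in> tuples \<tau> (ddom pa d)" "k \<in> tuples \<tau> (dcod pa d)"
  shows "F d i k = F e i k"
proof -
  note interp.simps [simp del]
  from assms(1) show ?thesis
  proof cases
    case id_l
    then show ?thesis using assms by (simp add: interp_Comp_Idw_left)
  next
    case id_r
    then show ?thesis using assms by (simp add: interp_Comp_Idw_right)
  next
    case comp_assoc
    then show ?thesis by (simp only: interp_Comp_assoc)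
  next
    case tens_assoc
    then show ?thesis by (simp only: interp_Tens_assoc)
  next
    case tens_unit_l
    then show ?thesis by (simp only: interp_Tens_Idw_Nil_left)
  next
    case tens_unit_r
    then show ?thesis using assms by (simp add: interp_Tens_Idw_Nil_right)
  next
    case tens_id
    then show ?thesis using assms by (simp add: interp_Tens_Idw)
  next
    case interchange
    then show ?thesis using assms by (simp add: interp_interchange)
  next
    case sw_nat
    then show ?thesis using assms by (simp add: interp_sw_nat)
  next
    case sw_hex
    then show ?thesis using assms by (simp add: interp_sw_hex)
  next
    case sw_inv
    then show ?thesis using assms by (simp add: interp_sw_inv)
  next
    case sw_unit
    then show ?thesis by (simp only: interp_Sw_Nil)
  next
    case coassoc
    then show ?thesis using assms by (simp add: interp_coassoc)
  next
    case cocomm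
    then show ?thesis using assms by (simp add: interp_cocomm)
  next
    case counit
    then show ?thesis using assms by (simp add: interp_counit)
  next
    case disc_unif
    then show ?thesis using assms by (simp add: interp_disc_unif)
  qed
qed

lemma cdu_eqv_sound:
  "cdu_eqv V pa d e \<Longrightarrow> i \<in> tuples \<tau> (ddom pa d) \<Longrightarrow> k \<in> tuples \<tau> (dcod pa d) \<Longrightarrow> F d i k = F e i k"
proof (induction arbitrary: i k rule: cdu_eqv.induct)
  case (ax d e)
  then show ?case by (simp add: cdu_ax_sound)
next
  case (sym d e)
  then show ?case using cdu_eqvD by metis
next
  case (trans d e f)
  then show ?case using cdu_eqvD by metis
next
  case (comp_cong d d' e e')
  have "dcod pa d' = dcod pa d"
    using cdu_eqvD[OF comp_cong.hyps(1)] by simp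
  then show ?case
    unfolding interp_Comp using comp_cong by (intro sum.cong) auto
next
  case (tens_cong d d' e e')
  have "ddom pa d' = ddom pa d" "dcod pa d' = dcod pa d"
    using cdu_eqvD[OF tens_cong.hyps(1)] by simp_all
  then show ?case
    using tens_cong by (simp add: take_drop_in_tuples)
qed simp

lemma interp_cdu_functor: "cdu_functor V pa \<tau> F"
  unfolding cdu_functor_def
proof (intro conjI allI impI ballI)
  show "finite (\<tau> x)" "\<tau> x \<noteq> {}" if "x \<in> V" for x
    using bn that by (auto simp: bayes_net_def)
  show "stoch_mat (tuples \<tau> (ddom pa d)) (tuples \<tau> (dcod pa d)) (F d)" if "wfd V pa d" for d
    using that by (rule interp_stoch_mat)
  show "F d i j = F e i j"
    if "cdu_eqv V pa d e" "i \<in> tuples \<tau> (ddom pa d)" "j \<in> tuples \<tau> (dcod pa d)" for d e i j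
    using that by (rule cdu_eqv_sound)
qed (auto simp: interp_Comp)

end

end

section \<open>A CDU functor is determined by its generators\<close>

lemma cdu_functor_stoch_mat:
  "cdu_functor V pa Fo Fm \<Longrightarrow> wfd V pa d
    \<Longrightarrow> stoch_mat (tuples Fo (ddom pa d)) (tuples Fo (dcod pa d)) (Fm d)"
  by (simp add: cdu_functor_def)

lemma cdu_functor_Idw:
  "cdu_functor V pa Fo Fm \<Longrightarrow> set u \<subseteq> V \<Longrightarrow> i \<in> tuples Fo u \<Longrightarrow> j \<in> tuples Fo u
    \<Longrightarrow> Fm (Idw u) i j = (if i = j then 1 else 0)"
  by (simp add: cdu_functor_def)

lemma cdu_functor_Comp:
  "cdu_functor V pa Fo Fm \<Longrightarrow> wfd V pa (Comp d e) \<Longrightarrow> i \<in> tuples Fo (ddom pa d)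
    \<Longrightarrow> k \<in> tuples Fo (dcod pa e)
    \<Longrightarrow> Fm (Comp d e) i k = (\<Sum>j\<in>tuples Fo (dcod pa d). Fm d i j * Fm e j k)"
  by (simp add: cdu_functor_def)

lemma cdu_functor_Tens:
  "cdu_functor V pa Fo Fm \<Longrightarrow> wfd V pa (Tens d e) \<Longrightarrow> i \<in> tuples Fo (ddom pa (Tens d e))
    \<Longrightarrow> j \<in> tuples Fo (dcod pa (Tens d e))
    \<Longrightarrow> Fm (Tens d e) i j = Fm d (take (length (ddom pa d)) i) (take (length (dcod pa d)) j)
      * Fm e (drop (length (ddom pa d)) i) (drop (length (dcod pa d)) j)"
  by (simp add: cdu_functor_def)

lemma cdu_functor_Sw:
  "cdu_functor V pa Fo Fm \<Longrightarrow> set u \<subseteq> V \<Longrightarrow> set w \<subseteq> V \<Longrightarrow> i \<in> tuples Fo (u @ w)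
    \<Longrightarrow> j \<in> tuples Fo (w @ u)
    \<Longrightarrow> Fm (Sw u w) i j = (if j = drop (length u) i @ take (length u) i then 1 else 0)"
  by (simp add: cdu_functor_def)

lemma cdu_functor_Cp:
  "cdu_functor V pa Fo Fm \<Longrightarrow> x \<in> V \<Longrightarrow> a \<in> Fo x \<Longrightarrow> b \<in> Fo x \<Longrightarrow> c \<in> Fo x
    \<Longrightarrow> Fm (Cp x) [a] [b, c] = (if a = b \<and> a = c then 1 else 0)"
  by (simp add: cdu_functor_def)

lemma cdu_functor_Dc: "cdu_functor V pa Fo Fm \<Longrightarrow> x \<in> V \<Longrightarrow> a \<in> Fo x \<Longrightarrow> Fm (Dc x) [a] [] = 1"
  by (simp add: cdu_functor_def)

lemma cdu_functor_Unif:
  "cdu_functor V pa Fo Fm \<Longrightarrow> x \<in> V \<Longrightarrow> a \<in> Fo x \<Longrightarrow> Fm (Unif x) [] [a] = 1 / real (card (Fo x))"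
  by (simp add: cdu_functor_def)

lemma bayes_net_bn_of_functor:
  assumes "cdu_functor V pa Fo Fm"
  shows "bayes_net V pa Fo (bn_of_functor Fm)"
proof -
  have "finite (Fo A) \<and> Fo A \<noteq> {} \<and> stoch_mat (tuples Fo (pa A)) (tuples Fo [A]) (Fm (Gen A))"
    if "A \<in> V" for A
    using assms that cdu_functor_stoch_mat[OF assms, of "Gen A"] by (auto simp: cdu_functor_def)
  then show ?thesis
    by (simp add: bayes_net_def stoch_mat_tuples_single bn_of_functor_def)
qed

lemma functor_eq_if_bn_eq:
  assumes pa_V: "\<forall>a\<in>V. set (pa a) \<subseteq> V"
    and F: "cdu_functor V pa Fo Fm" and F': "cdu_functor V pa Fo' Fm'"
    and eq: "bn_eq V pa Fo (bn_of_functor Fm) Fo' (bn_of_functor Fm')"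
  shows "functor_eq V pa Fo Fm Fo' Fm'"
proof -
  have Fo_eq: "\<forall>x\<in>V. Fo x = Fo' x"
    using eq by (simp add: bn_eq_def)
  have tuples_eq: "tuples Fo' u = tuples Fo u" if "set u \<subseteq> V" for u
    using Fo_eq that by (intro tuples_cong) auto
  have "Fm d i j = Fm' d i j"
    if "wfd V pa d" "i \<in> tuples Fo (ddom pa d)" "j \<in> tuples Fo (dcod pa d)" for d i j
    using that
  proof (induction d arbitrary: i j)
    case (Gen a)
    then show ?case
      using eq by (auto simp: bn_eq_def bn_of_functor_def tuples_single)
  next
    case (Comp d e)
    have V: "set (ddom pa d) \<subseteq> V" "set (dcod pa d) \<subseteq> V" "set (dcod pa e) \<subseteq> V"
      using Comp.prems(1) wfd_types_subset[OF pa_V] by auto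
    have "Fm (Comp d e) i j = (\<Sum>l\<in>tuples Fo (dcod pa d). Fm d i l * Fm e l j)"
      using cdu_functor_Comp[OF F] Comp.prems by simp
    also have "\<dots> = (\<Sum>l\<in>tuples Fo (dcod pa d). Fm' d i l * Fm' e l j)"
      using Comp by (intro sum.cong) auto
    also have "\<dots> = Fm' (Comp d e) i j"
      using cdu_functor_Comp[OF F'] Comp.prems V by (simp add: tuples_eq)
    finally show ?case .
  next
    case (Tens d e)
    have "set (ddom pa (Tens d e)) \<subseteq> V" "set (dcod pa (Tens d e)) \<subseteq> V"
      using Tens.prems(1) wfd_types_subset[OF pa_V] by blast+
    then have "i \<in> tuples Fo' (ddom pa (Tens d e))" "j \<in> tuples Fo' (dcod pa (Tens d e))"
      using Tens.prems(2,3) tuples_eq by auto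
    then show ?case
      using Tens cdu_functor_Tens[OF F] cdu_functor_Tens[OF F'] by (simp add: take_drop_in_tuples)
  qed (use Fo_eq tuples_eq cdu_functor_Idw[OF F] cdu_functor_Idw[OF F'] cdu_functor_Sw[OF F]
      cdu_functor_Sw[OF F'] cdu_functor_Cp[OF F] cdu_functor_Cp[OF F'] cdu_functor_Dc[OF F]
      cdu_functor_Dc[OF F'] cdu_functor_Unif[OF F] cdu_functor_Unif[OF F'] in
      \<open>auto simp: mem_tuples_Cons\<close>)
  then show ?thesis
    using Fo_eq by (simp add: functor_eq_def)
qed

theorem proposition2:
  fixes V :: "'v set" and pa :: "'v \<Rightarrow> 'v list"
  assumes "is_dag V pa"
  shows "(\<forall>(\<tau> :: 'v \<Rightarrow> 'a set) P. bayes_net V pa \<tau> P \<longrightarrow>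
            (\<exists>Fm. cdu_functor V pa \<tau> Fm \<and> bn_eq V pa \<tau> P \<tau> (bn_of_functor Fm)))
       \<and> (\<forall>(Fo :: 'v \<Rightarrow> 'a set) Fm. cdu_functor V pa Fo Fm \<longrightarrow>
            bayes_net V pa Fo (bn_of_functor Fm))
       \<and> (\<forall>(Fo :: 'v \<Rightarrow> 'a set) Fm Fo' Fm'. cdu_functor V pa Fo Fm \<and> cdu_functor V pa Fo' Fm'
            \<and> bn_eq V pa Fo (bn_of_functor Fm) Fo' (bn_of_functor Fm')
            \<longrightarrow> functor_eq V pa Fo Fm Fo' Fm')"
proof -
  have pa_V: "\<forall>a\<in>V. set (pa a) \<subseteq> V"
    using assms by (simp add: is_dag_def)
  have "cdu_functor V pa \<tau> (interp \<tau> P pa) \<and> bn_eq V pa \<tau> P \<tau> (bn_of_functor (interp \<tau> P pa))"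
    if "bayes_net V pa \<tau> P" for \<tau> :: "'v \<Rightarrow> 'a set" and P
    using interp_cdu_functor[OF pa_V that] by (simp add: bn_eq_def bn_of_functor_def)
  then show ?thesis
    using bayes_net_bn_of_functor functor_eq_if_bn_eq[OF pa_V] by blast
qed

end
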